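(* Let $\mathcal{G}=(V,D,B)$ be a mixed graph, and let $C_1,\dots,C_l$ be the vertex sets of the connected components of its bidirected part $\mathcal{G}_\leftrightarrow=(V,\emptyset,B)$. Then $\tau(\mathcal{G})\ge\max_{j=1,\dots,l}|\mathrm{Pa}(C_j)|$. Moreover, if $n<\max_{j}|\mathrm{Pa}(C_j)|$, then $\hat\ell(\mathcal{G}\mid S_{0,n})=\infty$ almost surely.
   Context: A mixed graph is a triple $\mathcal{G}=(V,D,B)$ with $V=\{1,\dots,p\}$, $D\subseteq V\times V$ directed edges $i\to j$ (no self-loops), and $B$ a set of 2-element subsets of $V$ (bidirected edges). $\mathrm{pa}(j)=\{k: k\to j\in D\}$ and $\mathrm{Pa}(A)=A\cup\bigcup_{i\in A}\mathrm{pa}(i)$. $\mathbb{R}^D_{\mathrm{reg}}$ is the set of real $p\times p$ matrices $\Lambda$ with $\lambda_{ij}=0$ whenever $i\to j\notin D$ and $I-\Lambda$ invertible; $PD(B)$ is the set of positive definite $\Omega$ with $\omega_{ij}=0$ for $i\neq j$, $\{i,j\}\notin B$; $PD(\mathcal{G})=\{(I-\Lambda)^{-T}\Omega(I-\Lambda)^{-1}:\Lambda\in\mathbb{R}^D_{\mathrm{reg}},\Omega\in PD(B)\}$. For an i.i.d. sample $X^{(1)},\dots,X^{(n)}$ from an absolutely continuous distribution on $\mathbb{R}^p$, $S_{0,n}=\frac1n\sum_s X^{(s)}(X^{(s)})^T$; $\ell(\Sigma\mid S)=-\log\det\Sigma-\mathrm{trace}(\Sigma^{-1}S)$; $\hat\ell(\mathcal{G}\mid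 S)=\sup_{\Sigma\in PD(\mathcal{G})}\ell(\Sigma\mid S)$; $\tau(\mathcal{G})=\min\{N\in\mathbb{N}:\hat\ell(\mathcal{G}\mid S_{0,n})<\infty\text{ a.s. for all }n\ge N\}$. *)

theory Defs
  imports "HOL-Probability.Probability"
begin

text \<open>Vertices V = {1..p} are modelled by a finite type 'v (p = CARD('v)).
  Directed edges D are pairs (i,j) meaning i -> j; bidirected edges B are 2-element sets.\<close>

definition mixed_graph :: "('v \<times> 'v) set \<Rightarrow> 'v set set \<Rightarrow> bool" where
  "mixed_graph D B \<longleftrightarrow> (\<forall>i. (i, i) \<notin> D) \<and> (\<forall>e\<in>B. card e = 2)"

definition pa :: "('v \<times> 'v) set \<Rightarrow> 'v \<Rightarrow> 'v set" where
  "pa D j = {k. (k, j) \<in> D}"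

definition Pa :: "('v \<times> 'v) set \<Rightarrow> 'v set \<Rightarrow> 'v set" where
  "Pa D A = A \<union> (\<Union>i\<in>A. pa D i)"

definition bidir_rel :: "'v set set \<Rightarrow> ('v \<times> 'v) set" where
  "bidir_rel B = {(i, j). {i, j} \<in> B}"

definition bidir_components :: "'v set set \<Rightarrow> 'v set set" where
  "bidir_components B = UNIV // ((bidir_rel B)\<^sup>*)"

definition pos_def_mat :: "real^'v^'v \<Rightarrow> bool" where
  "pos_def_mat M \<longleftrightarrow> transpose M = M \<and> (\<forall>x. x \<noteq> 0 \<longrightarrow> x \<bullet> (M *v x) > 0)"

definition R_D_reg :: "('v::finite \<times> 'v) set \<Rightarrow> (real^'v^'v) set" where
  "R_D_reg D = {\<Lambda>. (\<forall>i j. (i, j) \<notin> D \<longrightarrow> \<Lambda> $ i $ j = 0) \<and> invertible (mat 1 - \<Lambda>)}"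

definition PD_B :: "'v::finite set set \<Rightarrow> (real^'v^'v) set" where
  "PD_B B = {\<Omega>. pos_def_mat \<Omega> \<and> (\<forall>i j. i \<noteq> j \<and> {i, j} \<notin> B \<longrightarrow> \<Omega> $ i $ j = 0)}"

definition PD_G :: "('v::finite \<times> 'v) set \<Rightarrow> 'v set set \<Rightarrow> (real^'v^'v) set" where
  "PD_G D B = {transpose (matrix_inv (mat 1 - \<Lambda>)) ** \<Omega> ** matrix_inv (mat 1 - \<Lambda>) | \<Lambda> \<Omega>.
      \<Lambda> \<in> R_D_reg D \<and> \<Omega> \<in> PD_B B}"

definition loglik :: "real^'v^'v \<Rightarrow> real^'v^'v \<Rightarrow> real" where
  "loglik \<Sigma> S = - ln (det \<Sigma>) - trace (matrix_inv \<Sigma> ** S)"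

definition loglik_hat :: "('v::finite \<times> 'v) set \<Rightarrow> 'v set set \<Rightarrow> real^'v^'v \<Rightarrow> ereal" where
  "loglik_hat D B S = (SUP \<Sigma>\<in>PD_G D B. ereal (loglik \<Sigma> S))"

definition outer :: "real^'v \<Rightarrow> real^'v^'v" where
  "outer x = (\<chi> i j. x $ i * x $ j)"

definition sample_cov :: "nat \<Rightarrow> (nat \<Rightarrow> real^'v) \<Rightarrow> real^'v^'v" where
  "sample_cov n X = (1 / real n) *\<^sub>R (\<Sum>s<n. outer (X s))"

definition iid_sample :: "nat \<Rightarrow> 'a measure \<Rightarrow> (nat \<Rightarrow> 'a) measure" where
  "iid_sample n P = PiM {..<n} (\<lambda>_. P)"

text \<open>The set of N in the definition of tau: N \<ge> 1 and for all n \<ge> N, the MLE is finite a.s.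
  tau(G) is its minimum.\<close>
definition tau_set :: "('v::finite \<times> 'v) set \<Rightarrow> 'v set set \<Rightarrow> (real^'v) measure \<Rightarrow> nat set" where
  "tau_set D B P = {N. N \<ge> 1 \<and> (\<forall>n\<ge>N. AE X in iid_sample n P. loglik_hat D B (sample_cov n X) < \<infinity>)}"

end

theory Submission
  imports Defs
begin

text \<open>Let \<open>C\<close> be a bidirected component with \<open>n < |Pa(C)|\<close>. Any \<open>n\<close> coordinates of \<open>n\<close> samples from an
  absolutely continuous law are almost surely linearly independent, so on the sample every
  \<open>j \<in> C\<close> is a linear combination of \<open>n\<close> other coordinates in \<open>Pa(C)\<close>. A generic combination of these
  relations is a vector \<open>\<alpha>\<close>, supported on \<open>Pa(C)\<close> and nonzero on all of \<open>C\<close>, with \<open>\<alpha> \<bullet> X(s) = 0\<close>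
  for every sample. One directed edge from each parent outside \<open>C\<close> into \<open>C\<close> gives \<open>\<Lambda>\<close> with
  \<open>(I - \<Lambda>) \<alpha>\<^sub>C = \<alpha>\<close>, so the residuals \<open>(I - \<Lambda>)^T X(s)\<close> are orthogonal to \<open>\<alpha>\<^sub>C\<close>. Let \<open>\<Omega>(t)\<close> be the
  diagonal matrix with entries \<open>t\<close> on \<open>C\<close> and \<open>1\<close> off \<open>C\<close>, plus the \<open>\<alpha>\<close>-weighted Laplacian of the
  bidirected edges inside \<open>C\<close>. As \<open>C\<close> is connected, \<open>\<alpha>\<^sub>C\<close> spans the kernel of \<open>\<Omega>(0)\<close>; hence
  \<open>det \<Omega>(t) \<rightarrow> 0\<close>, while the residuals lie in the range of \<open>\<Omega>(0) \<le> \<Omega>(t)\<close>, which keeps the trace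
  term bounded. So the likelihood of \<open>(I - \<Lambda>)^-T \<Omega>(t) (I - \<Lambda>)^-1 \<in> PD(G)\<close> diverges as \<open>t \<rightarrow> 0\<close>.
  The bound on \<open>\<tau>(G)\<close> follows, since an almost surely infinite likelihood is not almost surely
  finite.\<close>

section \<open>Matrices\<close>

lemma matrix_inv_unique:
  fixes A B :: "'a::field^'n^'n"
  assumes "A ** B = mat 1" "B ** A = mat 1"
  shows "matrix_inv A = B"
proof -
  have inv: "A ** matrix_inv A = mat 1 \<and> matrix_inv A ** A = mat 1"
    unfolding matrix_inv_def by (rule someI[of _ B]) (use assms in blast)
  have "matrix_inv A = matrix_inv A ** (A ** B)"
    using assms by (simp add: matrix_mul_rid)
  also have "\<dots> = B"
    using inv by (simp add: matrix_mul_assoc matrix_mul_lid)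
  finally show ?thesis .
qed

lemma
  fixes A :: "'a::semiring_1^'n^'n"
  assumes "invertible A"
  shows matrix_inv_right: "A ** matrix_inv A = mat 1"
    and matrix_inv_left: "matrix_inv A ** A = mat 1"
  using someI_ex[OF assms[unfolded invertible_def]] unfolding matrix_inv_def by auto

lemma invertible_matrix_inv:
  fixes A :: "'a::semiring_1^'n^'n"
  assumes "invertible A"
  shows "invertible (matrix_inv A)"
  unfolding invertible_def using matrix_inv_right[OF assms] matrix_inv_left[OF assms] by blast

lemma matrix_add_rdistrib: "((A::'a::semiring_1^'n^'m) + B) ** (C::'a^'k^'n) = A ** C + B ** C"
  by (simp add: vec_eq_iff matrix_matrix_mult_def sum.distrib distrib_right)

lemma matrix_diff_rdistrib: "((A::'a::ring_1^'n^'m) - B) ** (C::'a^'k^'n) = A ** C - B ** C"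
  by (simp add: vec_eq_iff matrix_matrix_mult_def sum_subtractf left_diff_distrib)

lemma matrix_diff_ldistrib: "(A::'a::ring_1^'n^'m) ** ((B::'a^'k^'n) - C) = A ** B - A ** C"
  by (simp add: vec_eq_iff matrix_matrix_mult_def sum_subtractf right_diff_distrib)

lemma inner_matrix_vector_transpose:
  fixes M :: "real^'n^'m"
  shows "x \<bullet> (M *v y) = (transpose M *v x) \<bullet> y"
  by (simp add: dot_lmul_matrix)

lemma inner_symmetric_matrix_vector:
  fixes M :: "real^'n^'n"
  assumes "transpose M = M"
  shows "x \<bullet> (M *v y) = y \<bullet> (M *v x)"
  by (metis assms inner_commute inner_matrix_vector_transpose)

lemma matrix_vector_mult_sum:
  fixes A :: "'s \<Rightarrow> real^'n^'m"
  assumes "finite S"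
  shows "(\<Sum>s\<in>S. A s) *v y = (\<Sum>s\<in>S. A s *v y)"
  using assms by (induction S rule: finite_induct) (simp_all add: matrix_vector_mult_add_rdistrib)

lemma transpose_add: "transpose (A + B) = transpose A + transpose (B :: 'a::semiring_1^'n^'m)"
  by (simp add: transpose_def vec_eq_iff)

lemma transpose_sum: "transpose (\<Sum>s\<in>S. A s) = (\<Sum>s\<in>S. transpose (A s :: real^'n^'n))"
  unfolding transpose_def by (simp add: vec_eq_iff sum_component)

lemma continuous_on_det:
  fixes F :: "real \<Rightarrow> real^'n^'n"
  assumes "\<And>i j. continuous_on S (\<lambda>t. F t $ i $ j)"
  shows "continuous_on S (\<lambda>t. det (F t))"
  unfolding det_def
  by (intro continuous_on_sum continuous_on_mult continuous_on_const continuous_on_prod assms)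

lemma det_nonzero_iff_inj:
  fixes M :: "real^'n^'n"
  shows "det M \<noteq> 0 \<longleftrightarrow> inj ((*v) M)"
  using det_nz_iff_inj[of "(*v) M"] matrix_vector_mul_linear by (simp add: matrix_of_matrix_vector_mul)

lemma range_symmetric_matrix:
  fixes M :: "real^'n^'n"
  assumes sym: "transpose M = M" and orth: "\<And>x. M *v x = 0 \<Longrightarrow> z \<bullet> x = 0"
  shows "z \<in> range ((*v) M)"
proof -
  let ?S = "range ((*v) M)"
  have "subspace ?S"
    by (rule linear_subspace_image[OF matrix_vector_mul_linear subspace_UNIV])
  obtain p q where p: "p \<in> span ?S" and q: "\<And>w. w \<in> span ?S \<Longrightarrow> orthogonal q w"
    and z: "z = p + q"
    by (rule orthogonal_subspace_decomp_exists[of ?S z]) blast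
  have "q \<bullet> (M *v (M *v q)) = 0"
    using q[of "M *v (M *v q)"] by (simp add: span_base orthogonal_def)
  then have "M *v q = 0"
    using inner_matrix_vector_transpose[of q M "M *v q"] sym by simp
  then have "z \<bullet> q = 0" by (rule orth)
  moreover have "p \<bullet> q = 0" using q[OF p] by (simp add: orthogonal_def inner_commute)
  ultimately have "q = 0" unfolding z by (simp add: inner_add_left)
  then show ?thesis using p z span_subspace[OF order_refl span_superset \<open>subspace ?S\<close>] by simp
qed

lemma pos_def_mat_det_nonzero:
  fixes M :: "real^'n^'n"
  assumes "pos_def_mat M"
  shows "det M \<noteq> 0"
  unfolding det_nonzero_iff_inj
proof (rule injI)
  fix x y assume "M *v x = M *v y"
  then have "(x - y) \<bullet> (M *v (x - y)) = 0" by (simp add: matrix_vector_mult_diff_distrib)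
  then show "x = y" using assms unfolding pos_def_mat_def by (metis less_irrefl right_minus_eq)
qed

lemma pos_def_mat_invertible:
  fixes M :: "real^'n^'n"
  shows "pos_def_mat M \<Longrightarrow> invertible M"
  using pos_def_mat_det_nonzero invertible_det_nz by blast

lemma pos_def_mat_convex_comb:
  fixes M N :: "real^'n^'n"
  assumes "pos_def_mat M" "pos_def_mat N" "0 \<le> s" "s \<le> 1"
  shows "pos_def_mat ((1 - s) *\<^sub>R M + s *\<^sub>R N)"
  unfolding pos_def_mat_def
proof (intro conjI allI impI)
  show "transpose ((1 - s) *\<^sub>R M + s *\<^sub>R N) = (1 - s) *\<^sub>R M + s *\<^sub>R N"
    using assms(1,2) unfolding pos_def_mat_def by (simp add: transpose_def vec_eq_iff)
next
  fix x :: "real^'n" assume "x \<noteq> 0"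
  then have "x \<bullet> (M *v x) > 0" "x \<bullet> (N *v x) > 0"
    using assms(1,2) unfolding pos_def_mat_def by blast+
  moreover have "x \<bullet> (((1 - s) *\<^sub>R M + s *\<^sub>R N) *v x)
      = (1 - s) * (x \<bullet> (M *v x)) + s * (x \<bullet> (N *v x))"
    by (simp add: matrix_vector_mult_add_rdistrib scaleR_matrix_vector_assoc[symmetric] inner_add_right)
  ultimately show "x \<bullet> (((1 - s) *\<^sub>R M + s *\<^sub>R N) *v x) > 0"
    using assms(3,4) by (smt (verit) mult_nonneg_nonneg mult_pos_pos)
qed

text \<open>The determinant cannot vanish on the segment from the identity to \<open>M\<close>, so by the
  intermediate value theorem it keeps the sign of \<open>det (mat 1) = 1\<close>.\<close>

lemma pos_def_mat_det_pos:
  fixes M :: "real^'n^'n"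
  assumes pd: "pos_def_mat M"
  shows "det M > 0"
proof (rule ccontr)
  assume "\<not> det M > 0"
  define F where "F s = (1 - s) *\<^sub>R (mat 1 :: real^'n^'n) + s *\<^sub>R M" for s :: real
  have "pos_def_mat (mat 1 :: real^'n^'n)"
    unfolding pos_def_mat_def by simp
  then have pdF: "pos_def_mat (F s)" if "0 \<le> s" "s \<le> 1" for s
    unfolding F_def using pos_def_mat_convex_comb pd that by blast
  have "continuous_on {0..1} (\<lambda>s. det (F s))"
    by (rule continuous_on_det) (auto simp: F_def intro!: continuous_intros)
  then obtain s where "0 \<le> s" "s \<le> 1" "det (F s) = 0"
    using IVT2'[of "\<lambda>s. det (F s)" 1 0 0] \<open>\<not> det M > 0\<close> by (auto simp: F_def)
  then show False using pdF pos_def_mat_det_nonzero by blast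
qed

lemma matrix_inv_mult:
  fixes A B :: "real^'n^'n"
  assumes "invertible A" "invertible B"
  shows "matrix_inv (A ** B) = matrix_inv B ** matrix_inv A"
proof (rule matrix_inv_unique)
  have "A ** B ** (matrix_inv B ** matrix_inv A) = A ** (B ** matrix_inv B) ** matrix_inv A"
    by (simp add: matrix_mul_assoc)
  then show "A ** B ** (matrix_inv B ** matrix_inv A) = mat 1"
    using assms by (simp add: matrix_inv_right)
  have "matrix_inv B ** matrix_inv A ** (A ** B) = matrix_inv B ** (matrix_inv A ** A) ** B"
    by (simp add: matrix_mul_assoc)
  then show "matrix_inv B ** matrix_inv A ** (A ** B) = mat 1"
    using assms by (simp add: matrix_inv_left)
qed

lemma matrix_inv_transpose:
  fixes A :: "real^'n^'n"
  assumes "invertible A"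
  shows "matrix_inv (transpose A) = transpose (matrix_inv A)"
  by (rule matrix_inv_unique)
    (simp_all add: matrix_transpose_mul[symmetric] matrix_inv_left matrix_inv_right assms)

lemma matrix_inv_matrix_inv:
  fixes A :: "real^'n^'n"
  assumes "invertible A"
  shows "matrix_inv (matrix_inv A) = A"
  by (rule matrix_inv_unique) (simp_all add: matrix_inv_left matrix_inv_right assms)

lemma det_congruence:
  fixes N M :: "real^'n^'n"
  shows "det (transpose N ** M ** N) = (det N)\<^sup>2 * det M"
  by (simp add: det_mul det_transpose power2_eq_square)

text \<open>If \<open>M \<le> \<Omega>\<close> in the Loewner order, then \<open>\<Omega>\<inverse>\<close> is dominated by the pseudo-inverse of \<open>M\<close> on
  the range of \<open>M\<close>: with \<open>w = \<Omega>\<inverse> M v\<close>, positivity of \<open>M\<close> at \<open>v - w\<close> gives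
  \<open>2 v\<^sup>TMw \<le> v\<^sup>TMv + w\<^sup>TMw \<le> v\<^sup>TMv + w\<^sup>T\<Omega>w\<close>, and \<open>v\<^sup>TMw = w\<^sup>T\<Omega>w\<close>.\<close>

lemma inner_matrix_inv_le:
  fixes \<Omega> M :: "real^'n^'n"
  assumes "invertible \<Omega>" "transpose M = M"
    and psd: "\<And>x. 0 \<le> x \<bullet> (M *v x)" and le: "\<And>x. x \<bullet> (M *v x) \<le> x \<bullet> (\<Omega> *v x)"
  shows "(M *v v) \<bullet> (matrix_inv \<Omega> *v (M *v v)) \<le> v \<bullet> (M *v v)"
proof -
  define w where "w = matrix_inv \<Omega> *v (M *v v)"
  have \<Omega>w: "\<Omega> *v w = M *v v"
    unfolding w_def using matrix_inv_right[OF assms(1)] by (simp add: matrix_vector_mul_assoc matrix_mul_assoc)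
  have vw: "v \<bullet> (M *v w) = w \<bullet> (\<Omega> *v w)"
    using inner_symmetric_matrix_vector[OF assms(2)] \<Omega>w by (simp add: inner_commute)
  have "0 \<le> (v - w) \<bullet> (M *v (v - w))" by (rule psd)
  also have "\<dots> = v \<bullet> (M *v v) - 2 * (v \<bullet> (M *v w)) + w \<bullet> (M *v w)"
    using inner_symmetric_matrix_vector[OF assms(2), of w v]
    by (simp add: matrix_vector_mult_diff_distrib inner_diff_left inner_diff_right)
  finally have "v \<bullet> (M *v w) \<le> v \<bullet> (M *v v)"
    using le[of w] vw by linarith
  then show ?thesis
    using vw \<Omega>w by (simp add: w_def inner_commute)
qed

definition diag_on :: "'n set \<Rightarrow> real^'n^'n" where
  "diag_on A = (\<chi> i j. if i = j \<and> i \<in> A then 1 else 0)"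

lemma diag_on_mult_vector: "diag_on A *v x = (\<chi> i. if i \<in> A then x $ i else 0)"
  unfolding diag_on_def matrix_vector_mult_def by (simp add: vec_eq_iff if_distrib if_distribR cong: if_cong)

lemma inner_diag_on: "x \<bullet> (diag_on A *v y) = (\<Sum>i\<in>A. x $ i * y $ i)"
  unfolding diag_on_mult_vector inner_vec_def by (simp add: if_distrib sum.If_cases)

lemma transpose_diag_on: "transpose (diag_on A) = diag_on A"
  unfolding diag_on_def transpose_def by (simp add: vec_eq_iff)

lemma outer_mult_vector: "outer u *v y = (u \<bullet> y) *\<^sub>R u"
  unfolding outer_def matrix_vector_mult_def inner_vec_def
  by (simp add: vec_eq_iff sum_distrib_left mult_ac)

lemma transpose_outer: "transpose (outer u) = outer u"
  unfolding outer_def transpose_def by (simp add: vec_eq_iff mult.commute)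

lemma trace_outer: "trace (K ** outer x) = x \<bullet> (K *v x)"
  unfolding trace_def outer_def matrix_matrix_mult_def inner_vec_def matrix_vector_mult_def
  by (simp add: sum_distrib_left mult_ac)

lemma trace_scaleR: "trace (c *\<^sub>R A) = c * trace (A :: real^'n^'n)"
  by (simp add: trace_def sum_distrib_left)

lemma trace_sample_cov:
  "trace (K ** sample_cov n X) = (1 / real n) * (\<Sum>s<n. X s \<bullet> (K *v X s))"
proof -
  have "trace (K ** (\<Sum>s\<in>S. outer (X s))) = (\<Sum>s\<in>S. X s \<bullet> (K *v X s))" if "finite S" for S
    using that by (induction S rule: finite_induct)
      (simp_all add: matrix_add_ldistrib trace_add trace_outer, simp add: trace_def)
  then show ?thesis
    unfolding sample_cov_def matrix_scalar_ac scalar_matrix_assoc[symmetric] trace_scaleR by simp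
qed

section \<open>Almost sure independence of samples\<close>

lemma hyperplane_null_sets:
  fixes P :: "'a::euclidean_space measure"
  assumes "sets P = sets borel" and "absolutely_continuous lborel P" and "w \<noteq> 0"
  shows "{x. w \<bullet> x = 0} \<in> null_sets P"
proof -
  have "{x. w \<bullet> x = 0} \<in> null_sets lebesgue"
    using negligible_hyperplane[of w 0] assms(3) by (simp add: negligible_iff_null_sets)
  then have "{x. w \<bullet> x = 0} \<in> null_sets lborel"
    using null_sets_completion_iff[of "{x. w \<bullet> x = 0}" lborel]
      borel_closed[OF closed_hyperplane[of w 0]] by simp
  then show ?thesis using assms(2) unfolding absolutely_continuous_def by blast
qed

lemma (in product_sigma_finite) AE_PiM_insert:
  assumes "finite I" "i \<notin> I"
    and meas: "{x \<in> space (PiM (insert i I) M). \<not> Q x} \<in> sets (PiM (insert i I) M)"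
    and AE: "AE x in PiM I M. AE y in M i. Q (x(i := y))"
  shows "AE x in PiM (insert i I) M. Q x"
proof -
  let ?N = "{x \<in> space (PiM (insert i I) M). \<not> Q x}"
  have "emeasure (PiM (insert i I) M) ?N = (\<integral>\<^sup>+ x. indicator ?N x \<partial>PiM (insert i I) M)"
    using meas by simp
  also have "\<dots> = (\<integral>\<^sup>+ x. (\<integral>\<^sup>+ y. indicator ?N (x(i := y)) \<partial>M i) \<partial>PiM I M)"
    using meas by (intro product_nn_integral_insert assms) simp
  also have "\<dots> = (\<integral>\<^sup>+ x. 0 \<partial>PiM I M)"
  proof (rule nn_integral_cong_AE)
    show "AE x in PiM I M. (\<integral>\<^sup>+ y. indicator ?N (x(i := y)) \<partial>M i) = 0"
      using AE
    proof eventually_elim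
      case (elim x)
      then have "AE y in M i. indicator ?N (x(i := y)) = (0::ennreal)"
        by eventually_elim (simp split: split_indicator)
      then show ?case by (simp add: nn_integral_cong_AE)
    qed
  qed
  finally show ?thesis by (simp add: AE_iff_measurable[OF meas refl])
qed

text \<open>For \<open>s < k\<close>, row \<open>e s\<close> of \<open>frame k X\<close> is the sample \<open>X s\<close> restricted to \<open>J\<close>; all other
  rows are unit rows. Thus \<open>det (frame m X) \<noteq> 0\<close> says that the restrictions of the \<open>m\<close> samples
  to the \<open>m\<close> coordinates in \<open>J\<close> are linearly independent.\<close>

locale sample_frame =
  fixes J :: "'v::finite set" and m :: nat and e :: "nat \<Rightarrow> 'v"
  assumes bij: "bij_betw e {..<m} J"
begin

definition frame :: "nat \<Rightarrow> (nat \<Rightarrow> real^'v) \<Rightarrow> real^'v^'v" where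
  "frame k X = (\<chi> i. if i \<in> e ` {..<k}
     then (\<chi> j. if j \<in> J then X (inv_into {..<m} e i) $ j else 0) else axis i 1)"

lemma e_inj: "inj_on e {..<m}"
  using bij by (rule bij_betw_imp_inj_on)

lemma inv_into_e: "s < m \<Longrightarrow> inv_into {..<m} e (e s) = s"
  using e_inj by (simp add: inv_into_f_f)

lemma e_in_J: "s < m \<Longrightarrow> e s \<in> J"
  using bij by (auto simp: bij_betw_def)

lemma frame_0: "frame 0 X = mat 1"
  unfolding frame_def by (simp add: vec_eq_iff axis_def mat_def)

lemma frame_row:
  "s < k \<Longrightarrow> k \<le> m \<Longrightarrow> frame k X $ e s = (\<chi> j. if j \<in> J then X s $ j else 0)"
  using inv_into_e[of s] unfolding frame_def by (simp add: vec_eq_iff)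

lemma det_frame_measurable:
  fixes P :: "(real^'v) measure"
  assumes "sets P = sets borel" "k \<le> m"
  shows "(\<lambda>X. det (frame k X)) \<in> borel_measurable (PiM {..<k} (\<lambda>_. P))"
proof -
  have "(\<lambda>x. x $ j) \<in> borel_measurable P" for j
    using borel_measurable_nth[of j] measurable_cong_sets[OF assms(1) refl] by blast
  then have coord: "(\<lambda>X. X s $ j) \<in> borel_measurable (PiM {..<k} (\<lambda>_. P))" if "s < k" for s j
    using measurable_comp[OF measurable_component_singleton[of s "{..<k}" "\<lambda>_. P"]] that
    by (simp add: comp_def)
  have "(\<lambda>X. frame k X $ i $ j) \<in> borel_measurable (PiM {..<k} (\<lambda>_. P))" for i j
  proof (cases "i \<in> e ` {..<k}")
    case True
    then show ?thesis using \<open>k \<le> m\<close> coord by (auto simp: frame_row)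
  qed (simp add: frame_def)
  then show ?thesis
    unfolding det_def by (intro borel_measurable_sum borel_measurable_times
        borel_measurable_const borel_measurable_prod)
qed

text \<open>Laplace expansion along row \<open>e k\<close>.\<close>

lemma det_frame_insert:
  assumes "Suc k \<le> m"
  obtains w where "w $ e k = det (frame k X)" "\<And>y. det (frame (Suc k) (X(k := y))) = w \<bullet> y"
proof -
  have ek: "e k \<in> J" "e k \<notin> e ` {..<k}"
    using assms e_in_J inj_on_eq_iff[OF e_inj] by auto
  define R where "R j = (\<chi> i. if i = e k then axis j (1::real) else frame k X $ i)" for j
  define w where "w = (\<chi> j. if j \<in> J then det (R j) else 0)"
  have "det (frame (Suc k) (X(k := y))) = w \<bullet> y" for y
  proof -
    have row: "(\<chi> j. if j \<in> J then y $ j else 0) = (\<Sum>j\<in>J. y $ j *s axis j (1::real))"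
      using finite_subset[OF subset_UNIV]
      by (simp add: vec_eq_iff sum_component axis_def scalar_mult_eq_scaleR if_distrib cong: if_cong)
    have "frame (Suc k) (X(k := y))
        = (\<chi> i. if i = e k then (\<Sum>j\<in>J. y $ j *s axis j (1::real)) else frame k X $ i)"
      unfolding row[symmetric] using assms ek(2)
      by (auto simp: vec_eq_iff frame_def lessThan_Suc inv_into_e)
    then have "det (frame (Suc k) (X(k := y))) = (\<Sum>j\<in>J. y $ j * det (R j))"
      unfolding R_def by (simp add: det_linear_row_sum det_row_mul)
    also have "\<dots> = (\<Sum>j\<in>UNIV. if j \<in> J then y $ j * det (R j) else 0)"
      by (simp add: sum.inter_restrict[symmetric])
    also have "\<dots> = w \<bullet> y"
      unfolding w_def inner_vec_def by (intro sum.cong) auto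
    finally show ?thesis .
  qed
  moreover have "R (e k) = frame k X"
    unfolding R_def using ek(2) by (auto simp: vec_eq_iff frame_def)
  then have "w $ e k = det (frame k X)"
    unfolding w_def using ek(1) by simp
  ultimately show ?thesis using that by blast
qed

lemma AE_det_frame_nonzero:
  fixes P :: "(real^'v) measure"
  assumes P: "prob_space P" "sets P = sets borel" "absolutely_continuous lborel P" and "k \<le> m"
  shows "AE X in PiM {..<k} (\<lambda>_. P). det (frame k X) \<noteq> 0"
  using \<open>k \<le> m\<close>
proof (induction k)
  case 0
  then show ?case by (simp add: frame_0)
next
  case (Suc k)
  interpret product_sigma_finite "\<lambda>_::nat. P"
    using P(1) by (simp add: product_sigma_finite_def prob_space_imp_sigma_finite)
  have AE: "AE X in PiM {..<k} (\<lambda>_. P). AE y in P. det (frame (Suc k) (X(k := y))) \<noteq> 0"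
    using Suc.IH[OF Suc_leD[OF Suc.prems]]
  proof eventually_elim
    case (elim X)
    obtain w where w: "w $ e k = det (frame k X)"
      "\<And>y. det (frame (Suc k) (X(k := y))) = w \<bullet> y"
      using det_frame_insert[OF Suc.prems] by blast
    then have "{y. w \<bullet> y = 0} \<in> null_sets P"
      using elim by (intro hyperplane_null_sets P(2,3)) auto
    then have "AE y in P. y \<notin> {y. w \<bullet> y = 0}" by (rule AE_not_in)
    then show ?case by (simp add: w(2))
  qed
  have meas: "{X \<in> space (PiM (insert k {..<k}) (\<lambda>_. P)). \<not> det (frame (Suc k) X) \<noteq> 0}
      \<in> sets (PiM (insert k {..<k}) (\<lambda>_. P))"
    using det_frame_measurable[OF P(2) Suc.prems] by (simp add: lessThan_Suc)
  show ?case
    using AE_PiM_insert[OF finite_lessThan _ meas AE] unfolding lessThan_Suc by simp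
qed

lemma frame_solve:
  assumes "det (frame m X) \<noteq> 0"
  obtains \<beta> where "\<And>s. s < m \<Longrightarrow> (\<Sum>l\<in>J. \<beta> $ l * X s $ l) = X s $ j"
proof -
  have "invertible (frame m X)" using assms invertible_det_nz by blast
  define b where "b = (\<chi> i. if i \<in> J then X (inv_into {..<m} e i) $ j else 0)"
  define \<beta> where "\<beta> = matrix_inv (frame m X) *v b"
  have F\<beta>: "frame m X *v \<beta> = b"
    unfolding \<beta>_def using matrix_inv_right[OF \<open>invertible _\<close>] by (simp add: matrix_vector_mul_assoc)
  have "(\<Sum>l\<in>J. \<beta> $ l * X s $ l) = X s $ j" if "s < m" for s
  proof -
    have "(\<Sum>l\<in>J. \<beta> $ l * X s $ l) = (frame m X *v \<beta>) $ e s"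
      using that by (simp add: matrix_vector_mult_def frame_row if_distrib sum.If_cases mult.commute)
    also have "\<dots> = X s $ j" unfolding F\<beta> b_def using that e_in_J inv_into_e by simp
    finally show ?thesis .
  qed
  then show ?thesis using that by blast
qed

end

lemma AE_coordinates_in_span:
  fixes P :: "(real^'v::finite) measure"
  assumes "prob_space P" "sets P = sets borel" "absolutely_continuous lborel P" and "card J = m"
  shows "AE X in PiM {..<m} (\<lambda>_. P). \<forall>j. \<exists>\<beta>. \<forall>s<m. (\<Sum>l\<in>J. \<beta> $ l * X s $ l) = X s $ j"
proof -
  obtain e where "bij_betw e {..<m} J"
    using ex_bij_betw_nat_finite[of J] assms(4) by (auto simp: atLeast0LessThan)
  then interpret sample_frame J m e by unfold_locales
  show ?thesis
    using AE_det_frame_nonzero[OF assms(1-3) order_refl] by eventually_elim (metis frame_solve)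
qed

section \<open>Likelihoods unbounded along a degenerating family\<close>

locale component_relation =
  fixes D :: "('v::finite \<times> 'v) set" and B :: "'v set set" and C :: "'v set"
    and \<alpha> :: "real^'v" and n :: nat and X :: "nat \<Rightarrow> real^'v"
  assumes component: "C \<in> bidir_components B"
    and nonzero_on_C: "\<And>j. j \<in> C \<Longrightarrow> \<alpha> $ j \<noteq> 0"
    and support: "\<And>j. j \<notin> Pa D C \<Longrightarrow> \<alpha> $ j = 0"
    and orthogonal_sample: "\<And>s. s < n \<Longrightarrow> \<alpha> \<bullet> X s = 0"
begin

definition alphaC :: "real^'v" where
  "alphaC = (\<chi> l. if l \<in> C then \<alpha> $ l else 0)"

definition child :: "'v \<Rightarrow> 'v" where
  "child k = (SOME j. j \<in> C \<and> (k, j) \<in> D)"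

text \<open>One directed edge \<open>k \<rightarrow> child k\<close> for every parent \<open>k\<close> of \<open>C\<close> outside \<open>C\<close>, weighted so that
  \<open>(I - \<Lambda>) alphaC = \<alpha>\<close>.\<close>

definition Lam :: "real^'v^'v" where
  "Lam = (\<chi> k j. if k \<in> Pa D C - C \<and> j = child k then - \<alpha> $ k / \<alpha> $ j else 0)"

abbreviation IL :: "real^'v^'v" where
  "IL \<equiv> mat 1 - Lam"

lemma child_edge: "k \<in> Pa D C - C \<Longrightarrow> child k \<in> C \<and> (k, child k) \<in> D"
  unfolding child_def by (rule someI_ex) (auto simp: Pa_def pa_def)

lemma Lam_nonzero: "Lam $ k $ j \<noteq> 0 \<Longrightarrow> k \<in> Pa D C - C \<and> j = child k"
  unfolding Lam_def by (auto split: if_splits)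

lemma Lam_square: "Lam ** Lam = 0"
proof -
  have z: "Lam $ i $ c * Lam $ c $ j = 0" for i c j
    using Lam_nonzero[of i c] Lam_nonzero[of c j] child_edge by fastforce
  show ?thesis unfolding matrix_matrix_mult_def by (simp add: vec_eq_iff z)
qed

lemma IL_inverse: "IL ** (mat 1 + Lam) = mat 1" "(mat 1 + Lam) ** IL = mat 1"
  by (simp_all add: matrix_add_ldistrib matrix_add_rdistrib matrix_diff_ldistrib
      matrix_diff_rdistrib Lam_square)

lemma invertible_IL: "invertible IL"
  unfolding invertible_def using IL_inverse by blast

lemma Lam_in_R_D_reg: "Lam \<in> R_D_reg D"
  unfolding R_D_reg_def using Lam_nonzero child_edge invertible_IL by blast

lemma IL_alphaC: "IL *v alphaC = \<alpha>"
proof -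
  have "(Lam *v alphaC) $ k = (if k \<in> Pa D C - C then - \<alpha> $ k else 0)" for k
  proof (cases "k \<in> Pa D C - C")
    case True
    then have "Lam $ k $ j * alphaC $ j = (if j = child k then - \<alpha> $ k else 0)" for j
      using child_edge[OF True] nonzero_on_C[of "child k"] unfolding Lam_def alphaC_def by auto
    then show ?thesis using True unfolding matrix_vector_mult_def by simp
  next
    case False
    then have "Lam $ k $ j = 0" for j using Lam_nonzero by blast
    then show ?thesis using False unfolding matrix_vector_mult_def by auto
  qed
  then show ?thesis
    using support by (auto simp: vec_eq_iff matrix_vector_mult_diff_rdistrib alphaC_def)
qed

definition edges :: "('v \<times> 'v) set" where
  "edges = {(a, b). {a, b} \<in> B \<and> a \<in> C \<and> b \<in> C}"

definition edge_vec :: "'v \<Rightarrow> 'v \<Rightarrow> real^'v" where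
  "edge_vec a b = (\<chi> i. (if i = a then \<alpha> $ b else 0) - (if i = b then \<alpha> $ a else 0))"

definition Lap :: "real^'v^'v" where
  "Lap = (\<Sum>(a, b)\<in>edges. outer (edge_vec a b))"

text \<open>\<open>Omega 0\<close> is singular, with kernel spanned by \<open>alphaC\<close> because \<open>C\<close> is connected, while
  \<open>Omega t\<close> lies in \<open>PD(B)\<close> for \<open>t > 0\<close>.\<close>

definition Omega :: "real \<Rightarrow> real^'v^'v" where
  "Omega t = diag_on (- C) + t *\<^sub>R diag_on C + Lap"

lemma inner_edge_vec: "edge_vec a b \<bullet> x = \<alpha> $ b * x $ a - \<alpha> $ a * x $ b"
proof -
  have "edge_vec a b $ i * x $ i
      = (if i = a then \<alpha> $ b * x $ a else 0) - (if i = b then \<alpha> $ a * x $ b else 0)" for i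
    unfolding edge_vec_def by (simp add: left_diff_distrib)
  then show ?thesis unfolding inner_vec_def by (simp add: sum_subtractf)
qed

lemma inner_Lap: "x \<bullet> (Lap *v y) = (\<Sum>(a, b)\<in>edges. (edge_vec a b \<bullet> x) * (edge_vec a b \<bullet> y))"
  unfolding Lap_def
  by (simp add: matrix_vector_mult_sum inner_sum_right outer_mult_vector inner_commute
      mult.commute case_prod_beta)

lemma Lap_nonneg: "0 \<le> x \<bullet> (Lap *v x)"
  unfolding inner_Lap by (auto intro!: sum_nonneg)

lemma Lap_symmetric: "transpose Lap = Lap"
  unfolding Lap_def by (simp add: transpose_sum transpose_outer case_prod_beta)

lemma Lap_sparse:
  assumes "i \<noteq> j" "{i, j} \<notin> B"
  shows "Lap $ i $ j = 0"
proof -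
  have z: "edge_vec a b $ i * edge_vec a b $ j = 0" if "(a, b) \<in> edges" for a b
  proof (rule ccontr)
    assume "edge_vec a b $ i * edge_vec a b $ j \<noteq> 0"
    then have "i \<in> {a, b}" "j \<in> {a, b}" by (auto simp: edge_vec_def split: if_splits)
    then show False using that assms by (auto simp: edges_def insert_commute)
  qed
  have "(\<Sum>(a, b)\<in>edges. edge_vec a b $ i * edge_vec a b $ j) = 0"
    using z by (intro sum.neutral) auto
  then show ?thesis
    unfolding Lap_def by (simp add: sum_component outer_def case_prod_beta)
qed

lemma inner_Omega: "x \<bullet> (Omega t *v x) =
    (\<Sum>i\<in>-C. x $ i * x $ i) + t * (\<Sum>i\<in>C. x $ i * x $ i) + x \<bullet> (Lap *v x)"
  unfolding Omega_def
  by (simp add: matrix_vector_mult_add_rdistrib scaleR_matrix_vector_assoc[symmetric]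
      inner_add_right inner_diag_on)

lemma Omega_symmetric: "transpose (Omega t) = Omega t"
  unfolding Omega_def
  by (simp add: transpose_add transpose_scalar transpose_diag_on Lap_symmetric)

lemma Omega_in_PD_B:
  assumes "t > 0"
  shows "Omega t \<in> PD_B B"
  unfolding PD_B_def pos_def_mat_def
proof (intro CollectI conjI allI impI)
  fix x :: "real^'v" assume "x \<noteq> 0"
  then obtain i where "x $ i \<noteq> 0" by (auto simp: vec_eq_iff)
  then have sq_pos: "0 < x $ i * x $ i" by (auto simp: zero_less_mult_iff linorder_neq_iff)
  have nonneg: "0 \<le> (\<Sum>i\<in>A. x $ i * x $ i)" for A by (intro sum_nonneg) simp
  have "0 < (\<Sum>i\<in>-C. x $ i * x $ i) + t * (\<Sum>i\<in>C. x $ i * x $ i)"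
  proof (cases "i \<in> C")
    case True
    then have "0 < (\<Sum>i\<in>C. x $ i * x $ i)" using sq_pos by (intro sum_pos2[of C i]) auto
    then show ?thesis using nonneg[of "-C"] assms by (simp add: add_nonneg_pos)
  next
    case False
    then have "0 < (\<Sum>i\<in>-C. x $ i * x $ i)" using sq_pos by (intro sum_pos2[of "-C" i]) auto
    then show ?thesis using nonneg[of C] assms by (simp add: add_pos_nonneg)
  qed
  then show "0 < x \<bullet> (Omega t *v x)"
    unfolding inner_Omega using Lap_nonneg[of x] by linarith
next
  fix i j assume "i \<noteq> j \<and> {i, j} \<notin> B"
  then show "Omega t $ i $ j = 0"
    using Lap_sparse by (simp add: Omega_def diag_on_def)
qed (rule Omega_symmetric)

lemma continuous_on_det_Omega: "continuous_on S (\<lambda>t. det (Omega t))"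
  by (rule continuous_on_det) (simp add: Omega_def continuous_intros)

lemma Omega_0_alphaC: "Omega 0 *v alphaC = 0"
proof -
  have "edge_vec a b \<bullet> alphaC = 0" if "(a, b) \<in> edges" for a b
    using that by (simp add: inner_edge_vec edges_def alphaC_def mult.commute)
  then have "Lap *v alphaC = 0"
    unfolding Lap_def by (simp add: matrix_vector_mult_sum outer_mult_vector case_prod_beta)
  then show ?thesis
    by (simp add: Omega_def matrix_vector_mult_add_rdistrib diag_on_mult_vector alphaC_def
        vec_eq_iff)
qed

lemma det_Omega_0: "det (Omega 0) = 0"
proof -
  obtain j where "j \<in> C" using component by (auto simp: bidir_components_def quotient_def)
  then have "alphaC \<noteq> 0" using nonzero_on_C by (auto simp: alphaC_def vec_eq_iff)
  then have "\<not> inj ((*v) (Omega 0))"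
    using Omega_0_alphaC by (metis injD matrix_vector_mult_0_right)
  then show ?thesis using det_nonzero_iff_inj by blast
qed

text \<open>The ratio \<open>x $ j / \<alpha> $ j\<close> propagates along bidirected paths, which connect all of \<open>C\<close>.\<close>

lemma proportional_on_component:
  assumes "\<And>a b. (a, b) \<in> edges \<Longrightarrow> \<alpha> $ b * x $ a = \<alpha> $ a * x $ b"
  obtains c where "\<And>j. j \<in> C \<Longrightarrow> x $ j = c * \<alpha> $ j"
proof -
  obtain c0 where C: "C = (bidir_rel B)\<^sup>* `` {c0}"
    using component by (auto simp: bidir_components_def quotient_def)
  then have "c0 \<in> C" by auto
  have "x $ j * \<alpha> $ c0 = x $ c0 * \<alpha> $ j" if "j \<in> C" for j
  proof -
    have "(c0, j) \<in> (bidir_rel B)\<^sup>*" using that C by auto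
    then show ?thesis
    proof (induction rule: rtrancl_induct)
      case (step i j)
      then have "i \<in> C" "j \<in> C" using C by (auto intro: rtrancl_into_rtrancl)
      moreover have "{i, j} \<in> B" using step.hyps(2) by (simp add: bidir_rel_def)
      ultimately have edge: "\<alpha> $ j * x $ i = \<alpha> $ i * x $ j" by (intro assms) (simp add: edges_def)
      have "x $ j * \<alpha> $ c0 * \<alpha> $ i = \<alpha> $ c0 * (\<alpha> $ i * x $ j)" by (simp add: ac_simps)
      also have "\<dots> = \<alpha> $ j * (x $ i * \<alpha> $ c0)" by (simp add: edge[symmetric] ac_simps)
      also have "\<dots> = x $ c0 * \<alpha> $ j * \<alpha> $ i" by (simp only: step.IH) (simp add: ac_simps)
      finally have "x $ j * \<alpha> $ c0 * \<alpha> $ i = x $ c0 * \<alpha> $ j * \<alpha> $ i" .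
      then show ?case using nonzero_on_C[OF \<open>i \<in> C\<close>] by simp
    qed simp
  qed
  then show ?thesis
    using that[of "x $ c0 / \<alpha> $ c0"] nonzero_on_C[OF \<open>c0 \<in> C\<close>] by (simp add: field_simps)
qed

lemma Omega_0_kernel:
  assumes "Omega 0 *v x = 0"
  obtains c where "x = c *\<^sub>R alphaC"
proof -
  have "(\<Sum>i\<in>-C. x $ i * x $ i) + (\<Sum>(a, b)\<in>edges. (edge_vec a b \<bullet> x) * (edge_vec a b \<bullet> x)) = 0"
    using inner_Omega[of x 0] assms by (simp add: inner_Lap)
  moreover have "0 \<le> (\<Sum>i\<in>-C. x $ i * x $ i)"
    and "0 \<le> (\<Sum>(a, b)\<in>edges. (edge_vec a b \<bullet> x) * (edge_vec a b \<bullet> x))"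
    by (auto intro!: sum_nonneg)
  ultimately have off: "(\<Sum>i\<in>-C. x $ i * x $ i) = 0"
    and on: "(\<Sum>(a, b)\<in>edges. (edge_vec a b \<bullet> x) * (edge_vec a b \<bullet> x)) = 0"
    by linarith+
  have off_C: "x $ i = 0" if "i \<notin> C" for i
    using off that by (simp add: sum_nonneg_eq_0_iff)
  have "\<forall>p\<in>edges. (case p of (a, b) \<Rightarrow> (edge_vec a b \<bullet> x) * (edge_vec a b \<bullet> x)) = 0"
    using on by (subst (asm) sum_nonneg_eq_0_iff) auto
  then have on_edges: "edge_vec a b \<bullet> x = 0" if "(a, b) \<in> edges" for a b
    using that by auto
  have "\<alpha> $ b * x $ a = \<alpha> $ a * x $ b" if "(a, b) \<in> edges" for a b
    using on_edges[OF that] by (simp add: inner_edge_vec)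
  then obtain c where "\<And>j. j \<in> C \<Longrightarrow> x $ j = c * \<alpha> $ j"
    using proportional_on_component by blast
  then have "x = c *\<^sub>R alphaC" using off_C by (auto simp: vec_eq_iff alphaC_def)
  then show ?thesis by (rule that)
qed

lemma residual_in_range: "s < n \<Longrightarrow> transpose IL *v X s \<in> range ((*v) (Omega 0))"
proof (rule range_symmetric_matrix[OF Omega_symmetric])
  fix x assume "s < n" "Omega 0 *v x = 0"
  then obtain c where "x = c *\<^sub>R alphaC" using Omega_0_kernel by blast
  then show "(transpose IL *v X s) \<bullet> x = 0"
    using orthogonal_sample[OF \<open>s < n\<close>] inner_matrix_vector_transpose[of "X s" IL alphaC]
    by (simp add: IL_alphaC inner_commute)
qed

definition Sigma :: "real \<Rightarrow> real^'v^'v" where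
  "Sigma t = transpose (matrix_inv IL) ** Omega t ** matrix_inv IL"

lemma Sigma_in_PD_G: "t > 0 \<Longrightarrow> Sigma t \<in> PD_G D B"
  unfolding PD_G_def Sigma_def using Lam_in_R_D_reg Omega_in_PD_B by blast

lemma matrix_inv_Sigma:
  assumes "t > 0"
  shows "matrix_inv (Sigma t) = IL ** matrix_inv (Omega t) ** transpose IL"
proof -
  have inv: "invertible (Omega t)" "invertible (matrix_inv IL)"
    "invertible (transpose (matrix_inv IL))"
    using Omega_in_PD_B[OF assms] invertible_IL
    by (auto simp: PD_B_def pos_def_mat_invertible invertible_matrix_inv transpose_invertible)
  then show ?thesis
    unfolding Sigma_def
    by (simp add: matrix_inv_mult invertible_mult matrix_inv_transpose invertible_IL
        matrix_inv_matrix_inv matrix_mul_assoc)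
qed

lemma det_Sigma: "det (Sigma t) = (det (matrix_inv IL))\<^sup>2 * det (Omega t)"
  unfolding Sigma_def by (rule det_congruence)

text \<open>The trace term of the likelihood stays bounded as \<open>t \<rightarrow> 0\<close>: each residual
  \<open>(I - \<Lambda>)\<^sup>T X s\<close> lies in the range of \<open>Omega 0 \<le> Omega t\<close>.\<close>

lemma trace_bounded:
  obtains K where "\<And>t. t > 0 \<Longrightarrow> trace (matrix_inv (Sigma t) ** sample_cov n X) \<le> K"
proof -
  define v where "v s = (SOME v. Omega 0 *v v = transpose IL *v X s)" for s
  have v: "Omega 0 *v v s = transpose IL *v X s" if "s < n" for s
    unfolding v_def by (rule someI_ex) (use residual_in_range[OF that] in \<open>auto elim: rangeE\<close>)
  have "trace (matrix_inv (Sigma t) ** sample_cov n X)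
      \<le> (1 / real n) * (\<Sum>s<n. v s \<bullet> (Omega 0 *v v s))" if "t > 0" for t
  proof -
    have inv: "invertible (Omega t)"
      using Omega_in_PD_B[OF that] by (simp add: PD_B_def pos_def_mat_invertible)
    have le: "x \<bullet> (Omega 0 *v x) \<le> x \<bullet> (Omega t *v x)" for x
      using that by (simp add: inner_Omega sum_nonneg)
    have psd: "0 \<le> x \<bullet> (Omega 0 *v x)" for x
      using le[of x] Omega_in_PD_B[OF that] by (simp add: inner_Omega sum_nonneg Lap_nonneg)
    have "X s \<bullet> (matrix_inv (Sigma t) *v X s) \<le> v s \<bullet> (Omega 0 *v v s)" if "s < n" for s
    proof -
      have "X s \<bullet> (matrix_inv (Sigma t) *v X s)
          = (transpose IL *v X s) \<bullet> (matrix_inv (Omega t) *v (transpose IL *v X s))"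
        unfolding matrix_inv_Sigma[OF \<open>t > 0\<close>] matrix_vector_mul_assoc[symmetric]
        by (rule inner_matrix_vector_transpose)
      also have "\<dots> \<le> v s \<bullet> (Omega 0 *v v s)"
        using inner_matrix_inv_le[OF inv Omega_symmetric psd le, of "v s"] v[OF that] by simp
      finally show ?thesis .
    qed
    then show ?thesis
      unfolding trace_sample_cov by (intro mult_left_mono sum_mono) auto
  qed
  then show ?thesis using that by blast
qed

lemma det_Omega_small:
  assumes "\<delta> > 0"
  obtains t where "t > 0" "det (Omega t) < \<delta>"
proof -
  have "isCont (\<lambda>t. det (Omega t)) 0"
    using continuous_on_det_Omega[of UNIV] by (simp add: continuous_on_eq_continuous_at)
  then have "((\<lambda>t. det (Omega t)) \<longlongrightarrow> 0) (at_right 0)"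
    by (simp add: isCont_def det_Omega_0 filterlim_at_split)
  then have "\<forall>\<^sub>F t in at_right 0. 0 < t \<and> det (Omega t) < \<delta>"
    using assms by (auto intro: eventually_conj eventually_at_right_less order_tendstoD(2))
  then show ?thesis
    using that eventually_happens[of _ "at_right (0::real)"] by (auto simp: trivial_limit_at_right_real)
qed

lemma loglik_hat_infinite: "loglik_hat D B (sample_cov n X) = \<infinity>"
proof -
  obtain K where K: "\<And>t. t > 0 \<Longrightarrow> trace (matrix_inv (Sigma t) ** sample_cov n X) \<le> K"
    using trace_bounded by blast
  define c where "c = (det (matrix_inv IL))\<^sup>2"
  have "c > 0"
    using invertible_matrix_inv[OF invertible_IL] unfolding c_def by (simp add: invertible_det_nz)
  have "\<exists>\<Sigma>\<in>PD_G D B. ereal (real k) \<le> ereal (loglik \<Sigma> (sample_cov n X))" for k :: nat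
  proof -
    obtain t where t: "t > 0" "det (Omega t) < exp (- (real k + ln c + K))"
      using det_Omega_small[of "exp (- (real k + ln c + K))"] by auto
    have "0 < det (Omega t)"
      using Omega_in_PD_B[OF \<open>t > 0\<close>] by (simp add: PD_B_def pos_def_mat_det_pos)
    then have "ln (det (Omega t)) < - (real k + ln c + K)"
      using t(2) by (metis ln_exp ln_less_cancel_iff exp_gt_zero)
    moreover have "loglik (Sigma t) (sample_cov n X) \<ge> - ln c - ln (det (Omega t)) - K"
      using K[OF \<open>t > 0\<close>] \<open>c > 0\<close> \<open>0 < det (Omega t)\<close>
      unfolding loglik_def det_Sigma c_def[symmetric] by (simp add: ln_mult)
    ultimately show ?thesis
      using Sigma_in_PD_G[OF \<open>t > 0\<close>] by (intro bexI[of _ "Sigma t"]) auto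
  qed
  then show ?thesis unfolding loglik_hat_def by (rule SUP_PInfty)
qed

end

section \<open>The sample size bound\<close>

text \<open>Adding a multiple \<open>c\<close> of \<open>h\<close> to \<open>g\<close> kills a coordinate only for finitely many \<open>c\<close>.\<close>

lemma subspace_ex_nonzero_on:
  fixes W :: "(real^'n) set"
  assumes W: "subspace W" and "finite S" and ex: "\<And>j. j \<in> S \<Longrightarrow> \<exists>w\<in>W. w $ j \<noteq> 0"
  shows "\<exists>w\<in>W. \<forall>j\<in>S. w $ j \<noteq> 0"
  using \<open>finite S\<close> ex
proof (induction S rule: finite_induct)
  case empty
  then show ?case using subspace_0[OF W] by blast
next
  case (insert j S)
  obtain g where g: "g \<in> W" "\<forall>i\<in>S. g $ i \<noteq> 0" using insert by blast
  obtain h where h: "h \<in> W" "h $ j \<noteq> 0" using insert.prems by blast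
  obtain c :: real where c: "c \<notin> insert 0 ((\<lambda>i. - g $ i / h $ i) ` S)"
    by (meson ex_new_if_finite finite_imageI finite_insert infinite_UNIV_char_0 insert.hyps(1))
  have "g $ j + c * h $ j \<noteq> 0 \<or> g $ j \<noteq> 0" using c h(2) by auto
  then consider "g $ j \<noteq> 0" | "g $ j + c * h $ j \<noteq> 0" by blast
  then show ?case
  proof cases
    case 1
    then show ?thesis using g by blast
  next
    case 2
    have "g + c *\<^sub>R h \<in> W" using W g(1) h(1) by (simp add: subspace_add subspace_scale)
    moreover have "g $ i + c * h $ i \<noteq> 0" if "i \<in> S" for i
    proof (cases "h $ i = 0")
      case False
      have "c \<noteq> - g $ i / h $ i" using c that by blast
      then show ?thesis using False by (simp add: field_simps)
    qed (use g(2) that in simp)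
    ultimately show ?thesis using 2 by (intro bexI[of _ "g + c *\<^sub>R h"]) auto
  qed
qed

lemma ex_component_relation:
  fixes X :: "nat \<Rightarrow> real^'v::finite"
  assumes "C \<in> bidir_components B"
    and span: "\<And>j. j \<in> C \<Longrightarrow>
      \<exists>J \<beta>. J \<subseteq> Pa D C - {j} \<and> (\<forall>s<n. (\<Sum>l\<in>J. \<beta> $ l * X s $ l) = X s $ j)"
  shows "\<exists>\<alpha>. component_relation D B C \<alpha> n X"
proof -
  define W where "W = {a :: real^'v. (\<forall>l. l \<notin> Pa D C \<longrightarrow> a $ l = 0) \<and> (\<forall>s<n. a \<bullet> X s = 0)}"
  have "subspace W"
    unfolding subspace_def W_def by (simp add: inner_add_left)
  moreover have "\<exists>a\<in>W. a $ j \<noteq> 0" if j: "j \<in> C" for j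
  proof -
    obtain J \<beta> where J: "J \<subseteq> Pa D C - {j}" and \<beta>: "\<And>s. s < n \<Longrightarrow> (\<Sum>l\<in>J. \<beta> $ l * X s $ l) = X s $ j"
      using span[OF j] by blast
    define a where "a = axis j 1 - (\<chi> l. if l \<in> J then \<beta> $ l else 0)"
    have "(\<chi> l. if l \<in> J then \<beta> $ l else 0) \<bullet> X s = (\<Sum>l\<in>UNIV. if l \<in> J then \<beta> $ l * X s $ l else 0)"
      for s unfolding inner_vec_def by (intro sum.cong) auto
    then have "a \<bullet> X s = X s $ j - (\<Sum>l\<in>J. \<beta> $ l * X s $ l)" for s
      unfolding a_def inner_diff_left by (simp add: inner_axis' sum.inter_restrict[symmetric])
    then have "a \<in> W"
      using J \<beta> j by (auto simp: W_def a_def Pa_def axis_def)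
    moreover have "a $ j \<noteq> 0" using J by (auto simp: a_def)
    ultimately show ?thesis by blast
  qed
  ultimately obtain \<alpha> where "\<alpha> \<in> W" "\<forall>j\<in>C. \<alpha> $ j \<noteq> 0"
    using subspace_ex_nonzero_on[OF _ finite] by blast
  then show ?thesis
    using assms(1) unfolding W_def component_relation_def by blast
qed

lemma AE_ex_component_relation:
  fixes P :: "(real^'v::finite) measure"
  assumes "prob_space P" "sets P = sets borel" "absolutely_continuous lborel P"
    and "C \<in> bidir_components B" "n < card (Pa D C)"
  shows "AE X in iid_sample n P. \<exists>\<alpha>. component_relation D B C \<alpha> n X"
proof -
  have ex_J: "\<exists>J. J \<subseteq> Pa D C - {j} \<and> card J = n" if "j \<in> C" for j
  proof -
    have "j \<in> Pa D C" using that by (simp add: Pa_def)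
    then have "n \<le> card (Pa D C - {j})" using assms(5) card_Diff_singleton[of j] by simp
    then obtain J where "J \<subseteq> Pa D C - {j}" "card J = n" by (rule obtain_subset_with_card_n)
    then show ?thesis by blast
  qed
  define J where "J j = (SOME J. J \<subseteq> Pa D C - {j} \<and> card J = n)" for j
  have J: "J j \<subseteq> Pa D C - {j}" "card (J j) = n" if "j \<in> C" for j
    unfolding J_def using someI_ex[OF ex_J[OF that]] by blast+
  have "AE X in PiM {..<n} (\<lambda>_. P). \<forall>j'. \<exists>\<beta>. \<forall>s<n. (\<Sum>l\<in>J j. \<beta> $ l * X s $ l) = X s $ j'"
    if "j \<in> C" for j
    using AE_coordinates_in_span[OF assms(1-3) J(2)[OF that]] .
  then have "AE X in iid_sample n P.
      \<forall>j\<in>C. \<forall>j'. \<exists>\<beta>. \<forall>s<n. (\<Sum>l\<in>J j. \<beta> $ l * X s $ l) = X s $ j'"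
    unfolding iid_sample_def by (intro AE_finite_allI) simp_all
  then show ?thesis
  proof eventually_elim
    case (elim X)
    have "\<exists>J \<beta>. J \<subseteq> Pa D C - {j} \<and> (\<forall>s<n. (\<Sum>l\<in>J. \<beta> $ l * X s $ l) = X s $ j)"
      if j: "j \<in> C" for j
    proof -
      obtain \<beta> where "\<forall>s<n. (\<Sum>l\<in>J j. \<beta> $ l * X s $ l) = X s $ j" using elim j by blast
      then show ?thesis using J(1)[OF j] by blast
    qed
    then show ?case by (rule ex_component_relation[OF assms(4)])
  qed
qed

lemma AE_loglik_hat_infinite:
  fixes P :: "(real^'v::finite) measure"
  assumes "prob_space P" "sets P = sets borel" "absolutely_continuous lborel P"
    and "C \<in> bidir_components B" "n < card (Pa D C)"
  shows "AE X in iid_sample n P. loglik_hat D B (sample_cov n X) = \<infinity>"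
  using AE_ex_component_relation[OF assms] by eventually_elim (metis component_relation.loglik_hat_infinite)

lemma not_in_tau_set:
  assumes "prob_space P" and "AE X in iid_sample N P. loglik_hat D B (sample_cov N X) = \<infinity>"
  shows "N \<notin> tau_set D B P"
proof
  assume "N \<in> tau_set D B P"
  then have "AE X in iid_sample N P. loglik_hat D B (sample_cov N X) < \<infinity>"
    unfolding tau_set_def by auto
  with assms(2) have "AE X in iid_sample N P. False"
    by eventually_elim simp
  moreover have "prob_space (iid_sample N P)"
    unfolding iid_sample_def using assms(1) by (intro prob_space_PiM) simp
  ultimately show False by (simp add: prob_space.AE_False)
qed

theorem theorem8:
  fixes D :: "('v::finite \<times> 'v) set" and B :: "'v set set" and P :: "(real^'v) measure"
  assumes "mixed_graph D B"
    and "prob_space P" and "sets P = sets borel" and "absolutely_continuous lborel P"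
  shows "(\<forall>N\<in>tau_set D B P. N \<ge> Max ((\<lambda>C. card (Pa D C)) ` bidir_components B))
    \<and> (\<forall>n::nat. n \<ge> 1 \<and> n < Max ((\<lambda>C. card (Pa D C)) ` bidir_components B) \<longrightarrow>
         (AE X in iid_sample n P. loglik_hat D B (sample_cov n X) = \<infinity>))"
proof -
  let ?m = "Max ((\<lambda>C. card (Pa D C)) ` bidir_components B)"
  have "bidir_components B \<noteq> {}"
    by (auto simp: bidir_components_def quotient_def)
  then obtain C where "C \<in> bidir_components B" "card (Pa D C) = ?m"
    by (metis (mono_tags, lifting) Max_in finite finite_imageI image_iff image_is_empty)
  then have infinite: "AE X in iid_sample n P. loglik_hat D B (sample_cov n X) = \<infinity>"
    if "n < ?m" for n
    using AE_loglik_hat_infinite[OF assms(2-4)] that by auto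
  then have "?m \<le> N" if "N \<in> tau_set D B P" for N
    using not_in_tau_set[OF assms(2) infinite] that by (meson not_le)
  then show ?thesis using infinite by auto
qed

end
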